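(* For all integers $r\geqslant 1$ and $0\leqslant j\leqslant r$, in $\mathbb{C}[\alpha,\beta,\gamma]$ we have: (i) $\rho_j\phi_{r-j}\zeta_{r-j}\in J_r$; (ii) $\alpha\,\eta_j\psi_{r-j}\zeta_{r-j}\in J_r$.
   Context: Polynomials $\zeta_k\in\mathbb{C}[\alpha,\beta,\gamma]$: $\zeta_i=0$ for $i<0$, $\zeta_0=1$, $\zeta_{k+1}=\alpha\zeta_k+k^2(\beta+(-1)^k8)\zeta_{k-1}+2k(k-1)\gamma\zeta_{k-2}$ for $k\geqslant0$; $J_k$ is the ideal $(\zeta_k,\zeta_{k+1},\zeta_{k+2})$. Set $\beta_+=\beta+8$, $\beta_-=\beta-8$, $\phi_r=\beta_-^{\lfloor r/2\rfloor+1}\beta_+^{\lceil r/2\rceil}$, $\psi_r=\beta_-^{\lfloor r/2\rfloor}\beta_+^{\lceil r/2\rceil}$, $\rho_j=\beta_-^{2\lfloor (j-1)/2\rfloor}\beta_+^{j-1}$ and $\eta_j=\beta_-^{j-1}\beta_+^{j-1}$ for $j\geqslant1$, and $\rho_j=\eta_j=1$ for $j<1$. *)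

theory Defs
  imports Complex_Main "HOL-Computational_Algebra.Polynomial"
begin

text \<open>The polynomial ring C[alpha,beta,gamma] is represented as the iterated
univariate polynomial ring ((C[alpha])[beta])[gamma], i.e. the type
complex poly poly poly.\<close>

type_synonym mpoly3 = "complex poly poly poly"

definition alpha :: mpoly3 where "alpha = [:[:[:0, 1:]:]:]"
definition beta :: mpoly3 where "beta = [:[:0, 1:]:]"
definition gamma :: mpoly3 where "gamma = [:0, 1:]"

function zeta :: "nat \<Rightarrow> mpoly3" where
  "zeta 0 = 1"
| "zeta (Suc k) = alpha * zeta k
     + of_nat (k^2) * (beta + (-1)^k * 8) * (if k \<ge> 1 then zeta (k - 1) else 0)
     + of_nat (2 * k * (k - 1)) * gamma * (if k \<ge> 2 then zeta (k - 2) else 0)"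
  by pat_completeness auto
termination by (relation "measure id") auto

definition J_mem :: "nat \<Rightarrow> mpoly3 \<Rightarrow> bool" where
  "J_mem k p \<longleftrightarrow> (\<exists>a b c. p = a * zeta k + b * zeta (k + 1) + c * zeta (k + 2))"

definition beta_plus :: mpoly3 where "beta_plus = beta + 8"
definition beta_minus :: mpoly3 where "beta_minus = beta - 8"

definition phi :: "nat \<Rightarrow> mpoly3" where
  "phi r = beta_minus ^ (r div 2 + 1) * beta_plus ^ ((r + 1) div 2)"
definition psi :: "nat \<Rightarrow> mpoly3" where
  "psi r = beta_minus ^ (r div 2) * beta_plus ^ ((r + 1) div 2)"
definition rho :: "nat \<Rightarrow> mpoly3" where
  "rho j = (if j \<ge> 1 then beta_minus ^ (2 * ((j - 1) div 2)) * beta_plus ^ (j - 1) else 1)"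
definition eta :: "nat \<Rightarrow> mpoly3" where
  "eta j = (if j \<ge> 1 then beta_minus ^ (j - 1) * beta_plus ^ (j - 1) else 1)"

end

theory Submission
  imports Defs
begin

text \<open>Both claims are proved together by strong induction on \<open>2 j + k\<close>, where \<open>r = j + k\<close>.
The recurrence at index \<open>k + 1\<close> expresses \<open>(k+1)^2 (beta +- 8) zeta k\<close> through
\<open>zeta (k+2)\<close>, \<open>alpha zeta (k+1)\<close> and \<open>gamma zeta (k-1)\<close>. Multiplied by a suitable monomial
in \<open>beta_minus\<close>, \<open>beta_plus\<close>, the first two terms become multiples of the claims for
\<open>(j-2, k+2)\<close> and \<open>(j-1, k+1)\<close> (or lie in \<open>J r\<close> outright when \<open>j\<close> is small), and the third
is \<open>gamma\<close> times the claim for \<open>(j, k-1)\<close> in \<open>J (r-1)\<close>, which lands in \<open>J r\<close> because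
\<open>gamma J (r-1) \<subseteq> J r\<close>. The integer \<open>(k+1)^2\<close> is a unit over \<open>\<complex>\<close>.\<close>

declare zeta.simps [simp del]

lemma J_mem_add: "J_mem r p \<Longrightarrow> J_mem r q \<Longrightarrow> J_mem r (p + q)"
proof -
  assume "J_mem r p" "J_mem r q"
  then obtain a b c a' b' c' where "p = a * zeta r + b * zeta (r + 1) + c * zeta (r + 2)"
    and "q = a' * zeta r + b' * zeta (r + 1) + c' * zeta (r + 2)"
    unfolding J_mem_def by blast
  then show ?thesis unfolding J_mem_def
    by (intro exI[of _ "a + a'"] exI[of _ "b + b'"] exI[of _ "c + c'"]) (simp add: algebra_simps)
qed

lemma J_mem_dvd: "J_mem r p \<Longrightarrow> p dvd q \<Longrightarrow> J_mem r q"
proof -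
  assume "J_mem r p" "p dvd q"
  then obtain a b c d where "p = a * zeta r + b * zeta (r + 1) + c * zeta (r + 2)" and "q = p * d"
    unfolding J_mem_def by (blast elim: dvdE)
  then show ?thesis unfolding J_mem_def
    by (intro exI[of _ "a * d"] exI[of _ "b * d"] exI[of _ "c * d"]) (simp add: algebra_simps)
qed

lemma J_mem_mult: "J_mem r p \<Longrightarrow> J_mem r (q * p)"
  by (erule J_mem_dvd) simp

lemma J_mem_diff: "J_mem r p \<Longrightarrow> J_mem r q \<Longrightarrow> J_mem r (p - q)"
  using J_mem_add[of r p "- q"] J_mem_dvd[of r q "- q"] by simp

lemma J_mem_zeta: "r \<le> k \<Longrightarrow> k \<le> r + 2 \<Longrightarrow> J_mem r (zeta k)"
proof -
  assume "r \<le> k" "k \<le> r + 2"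
  then consider "k = r" | "k = r + 1" | "k = r + 2" by linarith
  then show ?thesis
    unfolding J_mem_def by cases (force intro: exI[of _ 0] exI[of _ 1])+
qed

lemma J_mem_cancel_of_nat: "J_mem r (of_nat n * p) \<Longrightarrow> n \<noteq> 0 \<Longrightarrow> J_mem r p"
proof -
  assume "J_mem r (of_nat n * p)" and "n \<noteq> 0"
  have "[:[:[:inverse (of_nat n):]:]:] * of_nat n = (1 :: mpoly3)"
    using \<open>n \<noteq> 0\<close> by (simp add: of_nat_poly pCons_one)
  then show "J_mem r p"
    using J_mem_mult[OF \<open>J_mem r (of_nat n * p)\<close>] by (metis mult.assoc mult_1)
qed

definition beta_pm :: "nat \<Rightarrow> mpoly3" where
  "beta_pm k = (if even k then beta_plus else beta_minus)"

lemma zeta_Suc_Suc: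
  "zeta (k + 2) = alpha * zeta (k + 1) + of_nat ((k + 1)\<^sup>2) * beta_pm (k + 1) * zeta k
     + of_nat (2 * (k + 1) * k) * gamma * zeta (k - 1)"
  by (cases k) (simp_all add: zeta.simps beta_pm_def beta_plus_def beta_minus_def
                 del: of_nat_power of_nat_mult of_nat_add)

lemma J_mem_gamma: "J_mem r p \<Longrightarrow> J_mem (r + 1) (gamma * p)"
proof -
  assume "J_mem r p"
  then obtain a b c where p: "p = a * zeta r + b * zeta (r + 1) + c * zeta (r + 2)"
    unfolding J_mem_def by blast
  have "of_nat (2 * (r + 2) * (r + 1)) * (gamma * zeta r) =
      zeta (r + 3) - alpha * zeta (r + 2) - of_nat ((r + 2)\<^sup>2) * beta_pm (r + 2) * zeta (r + 1)"
    using zeta_Suc_Suc[of "r + 1"] by (simp add: algebra_simps numeral_eq_Suc)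
  also have "J_mem (r + 1) \<dots>"
    by (intro J_mem_diff J_mem_mult J_mem_zeta) simp_all
  finally have "J_mem (r + 1) (gamma * zeta r)"
    by (rule J_mem_cancel_of_nat) simp
  moreover have "J_mem (r + 1) (zeta (r + 1))" and "J_mem (r + 1) (zeta (r + 2))"
    by (simp_all add: J_mem_zeta)
  moreover have "gamma * p = a * (gamma * zeta r) + (gamma * b) * zeta (r + 1) + (gamma * c) * zeta (r + 2)"
    by (simp add: p algebra_simps)
  ultimately show ?thesis
    by (simp add: J_mem_add J_mem_mult)
qed

text \<open>The \<open>gamma\<close>-term of the recurrence has coefficient \<open>2 (k+1) k\<close>, so it vanishes for
\<open>k = 0\<close>, where truncated subtraction makes \<open>zeta (k - 1)\<close> equal to \<open>zeta 0\<close>.\<close>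

lemma J_mem_by_recurrence:
  assumes "J_mem r (W * zeta (k + 2))" and "J_mem r (W * alpha * zeta (k + 1))"
    and "k \<ge> 1 \<Longrightarrow> J_mem r (W * gamma * zeta (k - 1))"
  shows "J_mem r (beta_pm (k + 1) * W * zeta k)"
proof -
  have "of_nat ((k + 1)\<^sup>2) * (beta_pm (k + 1) * W * zeta k) =
      W * zeta (k + 2) - W * alpha * zeta (k + 1) - of_nat (2 * (k + 1) * k) * (W * gamma * zeta (k - 1))"
    by (subst zeta_Suc_Suc) (simp add: algebra_simps)
  also have "J_mem r \<dots>"
  proof (cases "k = 0")
    case True
    then show ?thesis using assms(1,2) by (simp add: J_mem_diff)
  next
    case False
    then show ?thesis using assms by (simp add: J_mem_diff J_mem_mult)
  qed
  finally show ?thesis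
    by (rule J_mem_cancel_of_nat) simp
qed

definition beta_mon :: "nat \<Rightarrow> nat \<Rightarrow> mpoly3" where
  "beta_mon a b = beta_minus ^ a * beta_plus ^ b"

lemma beta_mon_mult: "beta_mon a b * beta_mon c d = beta_mon (a + c) (b + d)"
  by (simp add: beta_mon_def power_add mult_ac)

lemma beta_mon_dvd: "a \<le> c \<Longrightarrow> b \<le> d \<Longrightarrow> beta_mon a b dvd beta_mon c d"
  by (metis beta_mon_mult dvd_triv_left le_add_diff_inverse)

lemma rho_beta_mon: "rho i = beta_mon (2 * ((i - 1) div 2)) (i - 1)"
  by (simp add: rho_def beta_mon_def)

lemma eta_beta_mon: "eta i = beta_mon (i - 1) (i - 1)"
  by (simp add: eta_def beta_mon_def)

lemma phi_beta_mon: "phi k = beta_mon (k div 2 + 1) ((k + 1) div 2)"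
  by (simp add: phi_def beta_mon_def)

lemma psi_beta_mon: "psi k = beta_mon (k div 2) ((k + 1) div 2)"
  by (simp add: psi_def beta_mon_def)

lemma beta_pm_beta_mon: "beta_pm k = beta_mon (if even k then 0 else 1) (if even k then 1 else 0)"
  by (simp add: beta_pm_def beta_mon_def)

lemma phi_eq_beta_pm_mult: "phi k = beta_pm (k + 1) * beta_mon ((k + 1) div 2) (k div 2)"
  unfolding phi_beta_mon beta_pm_beta_mon beta_mon_mult
  by (cases "even k") (auto elim: evenE oddE)

lemma phi_diff_1_beta_mon: "k \<ge> 1 \<Longrightarrow> phi (k - 1) = beta_mon ((k + 1) div 2) (k div 2)"
  unfolding phi_beta_mon by (intro arg_cong2[where f = beta_mon]; presburger)

lemma psi_eq_beta_pm_mult: "k \<ge> 1 \<Longrightarrow> psi k = beta_pm (k + 1) * psi (k - 1)"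
  unfolding psi_beta_mon beta_pm_beta_mon beta_mon_mult
  by (cases "even k") (simp_all, (intro arg_cong2[where f = beta_mon]; presburger)+)

lemma J_mem_rho_phi_step:
  assumes "i \<ge> 1"
    and "i \<ge> 3 \<Longrightarrow> J_mem (i + k) (rho (i - 2) * phi (k + 2) * zeta (k + 2))"
    and "i \<ge> 2 \<Longrightarrow> J_mem (i + k) (alpha * eta (i - 1) * psi (k + 1) * zeta (k + 1))"
    and "k \<ge> 1 \<Longrightarrow> J_mem (i + k - 1) (rho i * phi (k - 1) * zeta (k - 1))"
  shows "J_mem (i + k) (rho i * phi k * zeta k)"
proof -
  define W where "W = rho i * beta_mon ((k + 1) div 2) (k div 2)"
  have "J_mem (i + k) (W * zeta (k + 2))"
  proof (cases "i \<ge> 3")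
    case True
    have "rho (i - 2) * phi (k + 2) dvd W"
      unfolding W_def rho_beta_mon phi_beta_mon beta_mon_mult
      using True by (intro beta_mon_dvd; presburger)
    then show ?thesis
      using assms(2)[OF True] by (elim J_mem_dvd) (simp add: mult_dvd_mono)
  next
    case False
    then show ?thesis
      using assms(1) by (intro J_mem_mult J_mem_zeta) simp_all
  qed
  moreover have "J_mem (i + k) (W * alpha * zeta (k + 1))"
  proof (cases "i \<ge> 2")
    case True
    have "eta (i - 1) * psi (k + 1) dvd W"
      unfolding W_def rho_beta_mon eta_beta_mon psi_beta_mon beta_mon_mult
      using True by (intro beta_mon_dvd; presburger)
    then have "alpha * eta (i - 1) * psi (k + 1) * zeta (k + 1) dvd W * alpha * zeta (k + 1)"
      by (simp add: mult_dvd_mono mult.assoc mult.commute[of alpha])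
    then show ?thesis
      using assms(3)[OF True] by (elim J_mem_dvd)
  next
    case False
    then show ?thesis
      using assms(1) by (intro J_mem_mult J_mem_zeta) simp_all
  qed
  moreover have "J_mem (i + k) (W * gamma * zeta (k - 1))" if "k \<ge> 1"
  proof -
    have "J_mem (i + k - 1 + 1) (gamma * (rho i * phi (k - 1) * zeta (k - 1)))"
      using J_mem_gamma assms(4) that by blast
    then show ?thesis
      unfolding W_def phi_diff_1_beta_mon[OF that, symmetric] using that by (simp add: ac_simps)
  qed
  ultimately have "J_mem (i + k) (beta_pm (k + 1) * W * zeta k)"
    by (rule J_mem_by_recurrence)
  then show ?thesis
    by (simp add: W_def phi_eq_beta_pm_mult ac_simps)
qed

lemma J_mem_alpha_eta_psi_step:
  assumes "i \<ge> 1" and "k \<ge> 1"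
    and "i \<ge> 3 \<Longrightarrow> J_mem (i + k) (alpha * eta (i - 2) * psi (k + 2) * zeta (k + 2))"
    and "i \<ge> 2 \<Longrightarrow> J_mem (i + k) (alpha * eta (i - 1) * psi (k + 1) * zeta (k + 1))"
    and "J_mem (i + k - 1) (alpha * eta i * psi (k - 1) * zeta (k - 1))"
  shows "J_mem (i + k) (alpha * eta i * psi k * zeta k)"
proof -
  define W where "W = alpha * eta i * psi (k - 1)"
  have "J_mem (i + k) (W * zeta (k + 2))"
  proof (cases "i \<ge> 3")
    case True
    have "eta (i - 2) * psi (k + 2) dvd eta i * psi (k - 1)"
      unfolding eta_beta_mon psi_beta_mon beta_mon_mult
      using True assms(2) by (intro beta_mon_dvd; presburger)
    then have "alpha * eta (i - 2) * psi (k + 2) * zeta (k + 2) dvd W * zeta (k + 2)"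
      unfolding W_def by (simp add: mult_dvd_mono mult.assoc)
    then show ?thesis
      using assms(3)[OF True] by (elim J_mem_dvd)
  next
    case False
    then show ?thesis
      using assms(1) by (intro J_mem_mult J_mem_zeta) simp_all
  qed
  moreover have "J_mem (i + k) (W * alpha * zeta (k + 1))"
  proof (cases "i \<ge> 2")
    case True
    have "eta (i - 1) * psi (k + 1) dvd eta i * psi (k - 1)"
      unfolding eta_beta_mon psi_beta_mon beta_mon_mult
      using True assms(2) by (intro beta_mon_dvd; presburger)
    then have "alpha * (eta (i - 1) * psi (k + 1)) * zeta (k + 1)
        dvd alpha * (eta i * psi (k - 1) * alpha) * zeta (k + 1)"
      by (rule mult_dvd_mono[OF mult_dvd_mono[OF dvd_refl dvd_mult2] dvd_refl])
    then show ?thesis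
      using assms(4)[OF True] by (elim J_mem_dvd) (simp add: W_def ac_simps)
  next
    case False
    then show ?thesis
      using assms(1) by (intro J_mem_mult J_mem_zeta) simp_all
  qed
  moreover have "J_mem (i + k) (W * gamma * zeta (k - 1))"
    using J_mem_gamma[OF assms(5)] assms(2) by (simp add: W_def ac_simps)
  ultimately have "J_mem (i + k) (beta_pm (k + 1) * W * zeta k)"
    by (rule J_mem_by_recurrence)
  then show ?thesis
    using assms(2) by (simp add: W_def psi_eq_beta_pm_mult ac_simps)
qed

lemma J_mem_alpha_eta_psi_zero:
  assumes "i \<ge> 1" and "i \<ge> 2 \<Longrightarrow> J_mem i (rho (i - 1) * phi 1 * zeta 1)"
  shows "J_mem i (alpha * eta i * psi 0 * zeta 0)"
proof -
  have "alpha * eta i * psi 0 * zeta 0 = eta i * zeta 1"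
    by (simp add: psi_def zeta.simps)
  also have "J_mem i (eta i * zeta 1)"
  proof (cases "i \<ge> 2")
    case True
    have "rho (i - 1) * phi 1 dvd eta i"
      unfolding rho_beta_mon eta_beta_mon phi_beta_mon beta_mon_mult
      using True by (intro beta_mon_dvd; presburger)
    then show ?thesis
      using assms(2)[OF True] by (elim J_mem_dvd) (simp add: mult_dvd_mono)
  next
    case False
    then show ?thesis
      using assms(1) by (intro J_mem_mult J_mem_zeta) simp_all
  qed
  finally show ?thesis .
qed

lemma J_mem_rho_phi_and_alpha_eta_psi:
  "J_mem (i + k) (rho i * phi k * zeta k) \<and> J_mem (i + k) (alpha * eta i * psi k * zeta k)"
proof (induction "2 * i + k" arbitrary: i k rule: less_induct)
  case less
  show ?case
  proof (cases "i = 0")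
    case True
    then show ?thesis
      using J_mem_zeta[of k k] by (simp add: J_mem_mult)
  next
    case False
    have IH: "J_mem r (rho i' * phi k' * zeta k')" "J_mem r (alpha * eta i' * psi k' * zeta k')"
      if "2 * i' + k' < 2 * i + k" and "i' + k' = r" for i' k' r
      using less that by blast+
    have "J_mem (i + k) (rho i * phi k * zeta k)"
      using False by (intro J_mem_rho_phi_step) (auto intro: IH)
    moreover have "J_mem (i + k) (alpha * eta i * psi k * zeta k)"
    proof (cases "k = 0")
      case True
      then show ?thesis
        using False by (simp add: J_mem_alpha_eta_psi_zero IH)
    next
      case False
      then show ?thesis
        using \<open>i \<noteq> 0\<close> by (intro J_mem_alpha_eta_psi_step) (auto intro: IH)
    qed
    ultimately show ?thesis ..
  qed
qed

theorem lemma4p1: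
  fixes r j :: nat
  assumes "r \<ge> 1" and "j \<le> r"
  shows "J_mem r (rho j * phi (r - j) * zeta (r - j)) \<and>
         J_mem r (alpha * eta j * psi (r - j) * zeta (r - j))"
  using J_mem_rho_phi_and_alpha_eta_psi[of j "r - j"] assms(2) by simp
end
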